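(* Let $G$ be a group with identity $\mathbf{1}$. If the complete graph $\mathrm{Cay}(G; G\setminus\{\mathbf{1}\})$ is CCA, then it is strongly CCA.
   Context: For an inverse-closed subset $S$ of $G$, $\mathrm{Cay}(G;S)$ has vertex set $G$ and an edge from $g$ to $gs$ for each $g\in G$, $s\in S$; the edge $g$—$gs$ is coloured $\{s,s^{-1}\}$. A graph automorphism is colour-preserving if it maps every edge to an edge of the same colour, and colour-permuting if whenever two edges have the same colour their images also have the same colour. A map $\varphi\colon G\to G$ is affine if $\varphi(x)=\alpha(gx)$ for some $\alpha\in\mathrm{Aut}(G)$, $g\in G$. A Cayley graph is CCA if all its colour-preserving automorphisms are affine, and strongly CCA if all its colour-permuting automorphisms are affine. *)

theory Defs
  imports "HOL-Algebra.Group"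
begin

text \<open>Cayley graph Cay(G;S): vertex set carrier G, x adjacent to y iff y = x s for some s in S,
  i.e. iff inv x \<otimes> y \<in> S (S inverse-closed makes this symmetric).\<close>
definition cay_adj :: "('a, 'b) monoid_scheme \<Rightarrow> 'a set \<Rightarrow> 'a \<Rightarrow> 'a \<Rightarrow> bool" where
  "cay_adj G S x y \<longleftrightarrow> x \<in> carrier G \<and> y \<in> carrier G \<and> inv\<^bsub>G\<^esub> x \<otimes>\<^bsub>G\<^esub> y \<in> S"

definition cay_colour :: "('a, 'b) monoid_scheme \<Rightarrow> 'a \<Rightarrow> 'a \<Rightarrow> 'a set" where
  "cay_colour G x y = {inv\<^bsub>G\<^esub> x \<otimes>\<^bsub>G\<^esub> y, inv\<^bsub>G\<^esub> (inv\<^bsub>G\<^esub> x \<otimes>\<^bsub>G\<^esub> y)}"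

definition inverse_closed :: "('a, 'b) monoid_scheme \<Rightarrow> 'a set \<Rightarrow> bool" where
  "inverse_closed G S \<longleftrightarrow> S \<subseteq> carrier G \<and> (\<forall>s\<in>S. inv\<^bsub>G\<^esub> s \<in> S)"

definition cay_aut :: "('a, 'b) monoid_scheme \<Rightarrow> 'a set \<Rightarrow> ('a \<Rightarrow> 'a) \<Rightarrow> bool" where
  "cay_aut G S \<phi> \<longleftrightarrow> bij_betw \<phi> (carrier G) (carrier G) \<and>
     (\<forall>x\<in>carrier G. \<forall>y\<in>carrier G. cay_adj G S x y \<longleftrightarrow> cay_adj G S (\<phi> x) (\<phi> y))"

definition colour_preserving :: "('a, 'b) monoid_scheme \<Rightarrow> 'a set \<Rightarrow> ('a \<Rightarrow> 'a) \<Rightarrow> bool" where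
  "colour_preserving G S \<phi> \<longleftrightarrow> cay_aut G S \<phi> \<and>
     (\<forall>x y. cay_adj G S x y \<longrightarrow> cay_colour G (\<phi> x) (\<phi> y) = cay_colour G x y)"

definition colour_permuting :: "('a, 'b) monoid_scheme \<Rightarrow> 'a set \<Rightarrow> ('a \<Rightarrow> 'a) \<Rightarrow> bool" where
  "colour_permuting G S \<phi> \<longleftrightarrow> cay_aut G S \<phi> \<and>
     (\<forall>x y u v. cay_adj G S x y \<longrightarrow> cay_adj G S u v \<longrightarrow> cay_colour G x y = cay_colour G u v \<longrightarrow>
        cay_colour G (\<phi> x) (\<phi> y) = cay_colour G (\<phi> u) (\<phi> v))"

definition affine :: "('a, 'b) monoid_scheme \<Rightarrow> ('a \<Rightarrow> 'a) \<Rightarrow> bool" where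
  "affine G \<phi> \<longleftrightarrow> (\<exists>\<alpha> g. \<alpha> \<in> iso G G \<and> g \<in> carrier G \<and>
     (\<forall>x\<in>carrier G. \<phi> x = \<alpha> (g \<otimes>\<^bsub>G\<^esub> x)))"

definition CCA :: "('a, 'b) monoid_scheme \<Rightarrow> 'a set \<Rightarrow> bool" where
  "CCA G S \<longleftrightarrow> (\<forall>\<phi>. colour_preserving G S \<phi> \<longrightarrow> affine G \<phi>)"

definition strongly_CCA :: "('a, 'b) monoid_scheme \<Rightarrow> 'a set \<Rightarrow> bool" where
  "strongly_CCA G S \<longleftrightarrow> (\<forall>\<phi>. colour_permuting G S \<phi> \<longrightarrow> affine G \<phi>)"

end

(*
  Normalise the colour-permuting map \<psi> so that \<psi> 1 = 1.  For every g the map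
  defect g = L(\<psi> g)^-1 o \<psi> o L(g) o \<psi>^-1 is colour-preserving and fixes 1, so by CCA it
  is an automorphism sending each element to itself or to its inverse, and
  \<psi>(g x) = \<psi>(g) defect g (\<psi> x).

  Two different nontrivial automorphisms of this kind would make every element act on
  every cyclic subgroup by +-1 under conjugation.  Then inversion is colour-preserving,
  hence an automorphism by CCA, so G is abelian; but in an abelian group inversion is the
  only nontrivial automorphism of this kind.  So all nontrivial defects equal one \<beta>.

  If some defect were nontrivial, there are two cases.  If \<psi> maps every twisted g (one
  with nontrivial defect) to a fixed point of \<beta>, then \<psi> maps all of G there,
  contradicting surjectivity.  Otherwise a twisted g1 with \<psi> g1 moved by \<beta> is an
  involution, and it forces every fixed point of \<beta> to be an involution; then \<beta> is
  inversion, G is abelian and consists of involutions, so \<beta> is trivial after all.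
  Hence all defects are trivial and \<psi> is an automorphism.
*)

theory Submission
  imports Defs
begin

section \<open>Automorphisms sending each element to itself or its inverse\<close>

definition self_or_inv_hom :: "('a, 'b) monoid_scheme \<Rightarrow> ('a \<Rightarrow> 'a) \<Rightarrow> bool" where
  "self_or_inv_hom G \<beta> \<longleftrightarrow> \<beta> \<in> hom G G \<and> (\<forall>x\<in>carrier G. \<beta> x = x \<or> \<beta> x = inv\<^bsub>G\<^esub> x)"

context group
begin

lemma inv_mult_cancel_left [simp]: "x \<in> carrier G \<Longrightarrow> y \<in> carrier G \<Longrightarrow> inv x \<otimes> (x \<otimes> y) = y"
  by (simp flip: m_assoc)

lemma mult_inv_cancel_left [simp]: "x \<in> carrier G \<Longrightarrow> y \<in> carrier G \<Longrightarrow> x \<otimes> (inv x \<otimes> y) = y"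
  by (simp flip: m_assoc)

lemma comm_square:
  assumes "x \<in> carrier G" "y \<in> carrier G" "x \<otimes> y = y \<otimes> x"
  shows "(x \<otimes> y) \<otimes> (x \<otimes> y) = (x \<otimes> x) \<otimes> (y \<otimes> y)"
  using assms by (metis m_assoc m_closed)

lemma square_eq_one_iff_inv_eq: "x \<in> carrier G \<Longrightarrow> x \<otimes> x = \<one> \<longleftrightarrow> inv x = x"
  by (metis inv_equality r_inv)

lemma self_or_inv_hom_group_hom: "self_or_inv_hom G \<beta> \<Longrightarrow> group_hom G G \<beta>"
  unfolding self_or_inv_hom_def group_hom_def group_hom_axioms_def by (simp add: is_group)

lemma self_or_inv_hom_closed: "self_or_inv_hom G \<beta> \<Longrightarrow> x \<in> carrier G \<Longrightarrow> \<beta> x \<in> carrier G"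
  by (rule group_hom.hom_closed[OF self_or_inv_hom_group_hom])

lemma self_or_inv_hom_mult:
  "self_or_inv_hom G \<beta> \<Longrightarrow> x \<in> carrier G \<Longrightarrow> y \<in> carrier G \<Longrightarrow> \<beta> (x \<otimes> y) = \<beta> x \<otimes> \<beta> y"
  by (rule group_hom.hom_mult[OF self_or_inv_hom_group_hom])

lemma self_or_inv_hom_inv: "self_or_inv_hom G \<beta> \<Longrightarrow> x \<in> carrier G \<Longrightarrow> \<beta> (inv x) = inv (\<beta> x)"
  by (rule group_hom.hom_inv[OF self_or_inv_hom_group_hom])

lemma self_or_inv_hom_moved: "self_or_inv_hom G \<beta> \<Longrightarrow> x \<in> carrier G \<Longrightarrow> \<beta> x \<noteq> x \<Longrightarrow> \<beta> x = inv x"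
  unfolding self_or_inv_hom_def by blast

lemma self_or_inv_hom_involution: "self_or_inv_hom G \<beta> \<Longrightarrow> x \<in> carrier G \<Longrightarrow> \<beta> (\<beta> x) = x"
  by (metis inv_inv self_or_inv_hom_inv self_or_inv_hom_moved)

lemma self_or_inv_hom_fixed_if_involution:
  "self_or_inv_hom G \<beta> \<Longrightarrow> x \<in> carrier G \<Longrightarrow> x \<otimes> x = \<one> \<Longrightarrow> \<beta> x = x"
  using square_eq_one_iff_inv_eq self_or_inv_hom_moved by metis

lemma self_or_inv_hom_compose:
  assumes "self_or_inv_hom G \<beta>\<^sub>1" "self_or_inv_hom G \<beta>\<^sub>2"
  shows "self_or_inv_hom G (\<lambda>x. \<beta>\<^sub>1 (\<beta>\<^sub>2 x))"
  unfolding self_or_inv_hom_def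
proof (intro conjI homI ballI)
  fix x y assume "x \<in> carrier G" "y \<in> carrier G"
  then show "\<beta>\<^sub>1 (\<beta>\<^sub>2 (x \<otimes> y)) = \<beta>\<^sub>1 (\<beta>\<^sub>2 x) \<otimes> \<beta>\<^sub>1 (\<beta>\<^sub>2 y)"
    using assms by (simp add: self_or_inv_hom_mult self_or_inv_hom_closed)
next
  fix x assume x: "x \<in> carrier G"
  then show "\<beta>\<^sub>1 (\<beta>\<^sub>2 x) \<in> carrier G" using assms by (simp add: self_or_inv_hom_closed)
  show "\<beta>\<^sub>1 (\<beta>\<^sub>2 x) = x \<or> \<beta>\<^sub>1 (\<beta>\<^sub>2 x) = inv x"
    using assms x by (metis inv_closed inv_inv self_or_inv_hom_inv self_or_inv_hom_moved)
qed

lemma self_or_inv_hom_conj_fixed: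
  assumes \<beta>: "self_or_inv_hom G \<beta>"
    and s: "s \<in> carrier G" "\<beta> s = s" and n: "n \<in> carrier G" "\<beta> n \<noteq> n"
  shows "n \<otimes> s \<otimes> inv n = inv s"
proof -
  have \<beta>n: "\<beta> n = inv n" using self_or_inv_hom_moved[OF \<beta> n] .
  have \<beta>ns: "\<beta> (n \<otimes> s) = inv n \<otimes> s" using \<beta> s n \<beta>n by (simp add: self_or_inv_hom_mult)
  with n s \<beta>n have "\<beta> (n \<otimes> s) \<noteq> n \<otimes> s" by simp
  then have "\<beta> (n \<otimes> s) = inv (n \<otimes> s)" using self_or_inv_hom_moved[OF \<beta>] s n by simp
  then have "inv n \<otimes> s = inv s \<otimes> inv n" using \<beta>ns s n by (simp add: inv_mult_group)
  then have "s = n \<otimes> inv s \<otimes> inv n" using s n by (metis inv_closed inv_solve_left' m_assoc m_closed)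
  then have "inv s = inv (n \<otimes> inv s \<otimes> inv n)" by simp
  then show ?thesis using s n by (simp add: inv_mult_group m_assoc)
qed

lemma self_or_inv_hom_fixed_commute:
  assumes \<beta>: "self_or_inv_hom G \<beta>" and n: "n \<in> carrier G" "\<beta> n \<noteq> n"
    and s: "s \<in> carrier G" "\<beta> s = s" and t: "t \<in> carrier G" "\<beta> t = t"
  shows "s \<otimes> t = t \<otimes> s"
proof -
  have "\<beta> (s \<otimes> t) = s \<otimes> t" using \<beta> s t by (simp add: self_or_inv_hom_mult)
  then have "inv (s \<otimes> t) = n \<otimes> (s \<otimes> t) \<otimes> inv n"
    using self_or_inv_hom_conj_fixed[OF \<beta> _ _ n] s t by simp
  also have "\<dots> = (n \<otimes> s \<otimes> inv n) \<otimes> (n \<otimes> t \<otimes> inv n)" using s t n by (simp add: m_assoc)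
  also have "\<dots> = inv s \<otimes> inv t" using self_or_inv_hom_conj_fixed[OF \<beta>] s t n by simp
  finally have "inv t \<otimes> inv s = inv s \<otimes> inv t" using s t by (simp add: inv_mult_group)
  then show ?thesis using s t by (metis inv_mult_group inv_inv inv_closed)
qed

lemma self_or_inv_hom_conj_fixed_cases:
  assumes \<beta>: "self_or_inv_hom G \<beta>" and n: "n \<in> carrier G" "\<beta> n \<noteq> n"
    and w: "w \<in> carrier G" "\<beta> w = w" and u: "u \<in> carrier G"
  shows "u \<otimes> w \<otimes> inv u = w \<or> u \<otimes> w \<otimes> inv u = inv w"
proof (cases "\<beta> u = u")
  case True
  then have "u \<otimes> w = w \<otimes> u" using self_or_inv_hom_fixed_commute[OF \<beta> n u _ w] by simp
  then show ?thesis using u w by (simp add: m_assoc)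
next
  case False
  then show ?thesis using self_or_inv_hom_conj_fixed[OF \<beta> w u] by simp
qed

text \<open>Each element is fixed by \<open>\<beta>\<^sub>1\<close>, by \<open>\<beta>\<^sub>2\<close> or by their
  composite, and all three are nontrivial.\<close>

lemma self_or_inv_homs_conj_cases:
  assumes \<beta>\<^sub>1: "self_or_inv_hom G \<beta>\<^sub>1" and \<beta>\<^sub>2: "self_or_inv_hom G \<beta>\<^sub>2"
    and n\<^sub>1: "n\<^sub>1 \<in> carrier G" "\<beta>\<^sub>1 n\<^sub>1 \<noteq> n\<^sub>1" and n\<^sub>2: "n\<^sub>2 \<in> carrier G" "\<beta>\<^sub>2 n\<^sub>2 \<noteq> n\<^sub>2"
    and d: "d \<in> carrier G" "\<beta>\<^sub>1 d \<noteq> \<beta>\<^sub>2 d"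
    and u: "u \<in> carrier G" and w: "w \<in> carrier G"
  shows "u \<otimes> w \<otimes> inv u = w \<or> u \<otimes> w \<otimes> inv u = inv w"
proof -
  let ?\<beta>\<^sub>3 = "\<lambda>x. \<beta>\<^sub>1 (\<beta>\<^sub>2 x)"
  have \<beta>\<^sub>3: "self_or_inv_hom G ?\<beta>\<^sub>3" using self_or_inv_hom_compose[OF \<beta>\<^sub>1 \<beta>\<^sub>2] .
  have "?\<beta>\<^sub>3 d \<noteq> d"
    using d \<beta>\<^sub>1 \<beta>\<^sub>2 by (metis self_or_inv_hom_closed self_or_inv_hom_involution)
  moreover have "\<beta>\<^sub>1 w = w \<or> \<beta>\<^sub>2 w = w \<or> ?\<beta>\<^sub>3 w = w"
    using w \<beta>\<^sub>1 \<beta>\<^sub>2 by (metis self_or_inv_hom_involution self_or_inv_hom_moved)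
  ultimately show ?thesis
    using self_or_inv_hom_conj_fixed_cases[OF _ _ _ w(1) _ u] \<beta>\<^sub>1 \<beta>\<^sub>2 \<beta>\<^sub>3 n\<^sub>1 n\<^sub>2 d(1) by blast
qed

lemma self_or_inv_hom_moved_mult_moved:
  assumes \<beta>: "self_or_inv_hom G \<beta>"
    and s: "s \<in> carrier G" "\<beta> s = s" "s \<otimes> s \<noteq> \<one>"
    and n: "n \<in> carrier G" "\<beta> n \<noteq> n" and m: "m \<in> carrier G" "\<beta> m \<noteq> m"
  shows "\<beta> (n \<otimes> m) = n \<otimes> m"
proof (rule ccontr)
  assume "\<beta> (n \<otimes> m) \<noteq> n \<otimes> m"
  then have "inv s = n \<otimes> m \<otimes> s \<otimes> inv (n \<otimes> m)"
    using self_or_inv_hom_conj_fixed[OF \<beta> s(1,2)] n m by simp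
  also have "\<dots> = n \<otimes> (m \<otimes> s \<otimes> inv m) \<otimes> inv n" using n m s by (simp add: inv_mult_group m_assoc)
  also have "\<dots> = s"
    using self_or_inv_hom_conj_fixed[OF \<beta> _ _ n] self_or_inv_hom_conj_fixed[OF \<beta> s(1,2) m]
      self_or_inv_hom_inv[OF \<beta> s(1)] s by simp
  finally show False using s square_eq_one_iff_inv_eq by blast
qed

lemma self_or_inv_hom_eq_inv_if_comm:
  assumes \<beta>: "self_or_inv_hom G \<beta>" and n: "n \<in> carrier G" "\<beta> n \<noteq> n"
    and comm: "\<And>x y. x \<in> carrier G \<Longrightarrow> y \<in> carrier G \<Longrightarrow> x \<otimes> y = y \<otimes> x"
    and x: "x \<in> carrier G"
  shows "\<beta> x = inv x"
proof (cases "\<beta> x = x")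
  case True
  have "x = n \<otimes> x \<otimes> inv n" using comm[OF n(1) x] n x by (simp add: m_assoc)
  then show ?thesis using self_or_inv_hom_conj_fixed[OF \<beta> x True n] True by simp
next
  case False
  then show ?thesis using self_or_inv_hom_moved[OF \<beta> x] by simp
qed

lemma comm_if_self_or_inv_hom_inv:
  assumes "self_or_inv_hom G \<beta>" "\<And>x. x \<in> carrier G \<Longrightarrow> \<beta> x = inv x"
    and x: "x \<in> carrier G" and y: "y \<in> carrier G"
  shows "x \<otimes> y = y \<otimes> x"
proof -
  have "inv y \<otimes> inv x = inv x \<otimes> inv y"
    using assms self_or_inv_hom_mult[OF assms(1) x y] by (simp add: inv_mult_group)
  then show ?thesis using x y by (metis inv_closed inv_inv inv_mult_group)
qed

end

section \<open>The complete Cayley graph\<close>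

context group
begin

lemma complete_cay_adj:
  "cay_adj G (carrier G - {\<one>}) x y \<longleftrightarrow> x \<in> carrier G \<and> y \<in> carrier G \<and> x \<noteq> y"
  unfolding cay_adj_def by (auto simp: inv_solve_left')

lemma complete_cay_aut:
  "cay_aut G (carrier G - {\<one>}) \<phi> \<longleftrightarrow> bij_betw \<phi> (carrier G) (carrier G)"
  unfolding cay_aut_def complete_cay_adj
  by (metis bij_betw_apply bij_betw_imp_inj_on inj_on_contraD)

lemma cay_colour_mult_left:
  "a \<in> carrier G \<Longrightarrow> x \<in> carrier G \<Longrightarrow> y \<in> carrier G \<Longrightarrow>
    cay_colour G (a \<otimes> x) (a \<otimes> y) = cay_colour G x y"
  unfolding cay_colour_def by (simp add: inv_mult_group m_assoc)

lemma cay_colour_one_left: "v \<in> carrier G \<Longrightarrow> cay_colour G \<one> v = {v, inv v}"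
  unfolding cay_colour_def by simp

lemma bij_betw_mult_left: "a \<in> carrier G \<Longrightarrow> bij_betw (\<lambda>x. a \<otimes> x) (carrier G) (carrier G)"
  by (rule bij_betw_byWitness[where f' = "\<lambda>x. inv a \<otimes> x"]) auto

lemma affine_fixing_one_iso:
  assumes "affine G \<phi>" "\<phi> \<one> = \<one>"
  obtains \<sigma> where "\<sigma> \<in> iso G G" "\<And>x. x \<in> carrier G \<Longrightarrow> \<phi> x = \<sigma> x"
proof -
  obtain \<sigma> g where \<sigma>: "\<sigma> \<in> iso G G" "g \<in> carrier G" "\<And>x. x \<in> carrier G \<Longrightarrow> \<phi> x = \<sigma> (g \<otimes> x)"
    using assms(1) unfolding affine_def by blast
  have "group_hom G G \<sigma>" using \<sigma>(1) is_group by (simp add: group_hom_def group_hom_axioms_def iso_def)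
  then have "\<sigma> g = \<sigma> \<one>" using \<sigma> assms(2) by (metis group_hom.hom_one one_closed r_one)
  then have "g = \<one>" using \<sigma>(1,2) unfolding iso_def by (auto dest: bij_betw_imp_inj_on inj_onD)
  then show ?thesis using that \<sigma> by simp
qed

lemma colour_preserving_fixing_one_self_or_inv_hom:
  assumes CCA: "CCA G (carrier G - {\<one>})"
    and \<phi>: "colour_preserving G (carrier G - {\<one>}) \<phi>" and one: "\<phi> \<one> = \<one>"
  shows "self_or_inv_hom G \<phi>"
  unfolding self_or_inv_hom_def
proof
  obtain \<sigma> where "\<sigma> \<in> iso G G" "\<And>x. x \<in> carrier G \<Longrightarrow> \<phi> x = \<sigma> x"
    using affine_fixing_one_iso CCA \<phi> one unfolding CCA_def by metis
  then show "\<phi> \<in> hom G G" by (metis hom_restrict iso_imp_homomorphism)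
  show "\<forall>x\<in>carrier G. \<phi> x = x \<or> \<phi> x = inv x"
  proof
    fix x assume x: "x \<in> carrier G"
    show "\<phi> x = x \<or> \<phi> x = inv x"
    proof (cases "x = \<one>")
      case False
      then have "cay_colour G \<one> (\<phi> x) = cay_colour G \<one> x"
        using \<phi> x one unfolding colour_preserving_def complete_cay_adj by (metis one_closed)
      moreover have "\<phi> x \<in> carrier G"
        using \<phi> x unfolding colour_preserving_def complete_cay_aut by (metis bij_betw_apply)
      ultimately have "{\<phi> x, inv (\<phi> x)} = {x, inv x}" using x by (simp add: cay_colour_one_left)
      then show ?thesis by blast
    qed (simp add: one)
  qed
qed

lemma inv_colour_preserving:
  assumes conj: "\<And>u w. u \<in> carrier G \<Longrightarrow> w \<in> carrier G \<Longrightarrow> u \<otimes> w \<otimes> inv u = w \<or> u \<otimes> w \<otimes> inv u = inv w"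
  shows "colour_preserving G (carrier G - {\<one>}) (\<lambda>x. inv x)"
  unfolding colour_preserving_def complete_cay_aut
proof (intro conjI allI impI)
  show "bij_betw (\<lambda>x. inv x) (carrier G) (carrier G)"
    by (rule bij_betw_byWitness[where f' = "\<lambda>x. inv x"]) auto
  fix x y assume "cay_adj G (carrier G - {\<one>}) x y"
  then have x: "x \<in> carrier G" and y: "y \<in> carrier G" by (auto simp: complete_cay_adj)
  define w where "w = inv x \<otimes> y"
  have w: "w \<in> carrier G" using x y by (simp add: w_def)
  have "x \<otimes> inv y = x \<otimes> inv w \<otimes> inv x" using x y by (simp add: w_def inv_mult_group m_assoc)
  then have "cay_colour G (inv x) (inv y) = {x \<otimes> inv w \<otimes> inv x, inv (x \<otimes> inv w \<otimes> inv x)}"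
    using x by (simp add: cay_colour_def)
  moreover have "x \<otimes> inv w \<otimes> inv x = inv w \<or> x \<otimes> inv w \<otimes> inv x = w"
    using conj[OF x inv_closed[OF w]] w by simp
  moreover have "cay_colour G x y = {w, inv w}" by (simp add: cay_colour_def w_def)
  ultimately show "cay_colour G (inv x) (inv y) = cay_colour G x y"
    using w by (auto simp: insert_commute)
qed

lemma CCA_self_or_inv_hom_unique:
  assumes CCA: "CCA G (carrier G - {\<one>})"
    and \<beta>\<^sub>1: "self_or_inv_hom G \<beta>\<^sub>1" and \<beta>\<^sub>2: "self_or_inv_hom G \<beta>\<^sub>2"
    and n\<^sub>1: "n\<^sub>1 \<in> carrier G" "\<beta>\<^sub>1 n\<^sub>1 \<noteq> n\<^sub>1" and n\<^sub>2: "n\<^sub>2 \<in> carrier G" "\<beta>\<^sub>2 n\<^sub>2 \<noteq> n\<^sub>2"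
    and x: "x \<in> carrier G"
  shows "\<beta>\<^sub>1 x = \<beta>\<^sub>2 x"
proof (rule ccontr)
  assume "\<beta>\<^sub>1 x \<noteq> \<beta>\<^sub>2 x"
  then have "colour_preserving G (carrier G - {\<one>}) (\<lambda>x. inv x)"
    using inv_colour_preserving self_or_inv_homs_conj_cases[OF \<beta>\<^sub>1 \<beta>\<^sub>2 n\<^sub>1 n\<^sub>2 x] by blast
  then have inv: "self_or_inv_hom G (\<lambda>x. inv x)"
    using colour_preserving_fixing_one_self_or_inv_hom[OF CCA] by simp
  have "\<beta>\<^sub>1 x = inv x" "\<beta>\<^sub>2 x = inv x"
    using self_or_inv_hom_eq_inv_if_comm[OF \<beta>\<^sub>1 n\<^sub>1 _ x] self_or_inv_hom_eq_inv_if_comm[OF \<beta>\<^sub>2 n\<^sub>2 _ x]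
      comm_if_self_or_inv_hom_inv[OF inv] by simp_all
  then show False using \<open>\<beta>\<^sub>1 x \<noteq> \<beta>\<^sub>2 x\<close> by simp
qed

lemma colour_permuting_mult_left:
  assumes \<phi>: "colour_permuting G (carrier G - {\<one>}) \<phi>" and c: "c \<in> carrier G"
  shows "colour_permuting G (carrier G - {\<one>}) (\<lambda>x. c \<otimes> \<phi> x)"
  unfolding colour_permuting_def complete_cay_aut
proof (intro conjI allI impI)
  have bij: "bij_betw \<phi> (carrier G) (carrier G)"
    using \<phi> unfolding colour_permuting_def complete_cay_aut by blast
  then have "bij_betw ((\<lambda>x. c \<otimes> x) \<circ> \<phi>) (carrier G) (carrier G)"
    using bij_betw_trans bij_betw_mult_left[OF c] by blast
  then show "bij_betw (\<lambda>x. c \<otimes> \<phi> x) (carrier G) (carrier G)" by (simp add: comp_def)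
  fix x y u v
  assume adj: "cay_adj G (carrier G - {\<one>}) x y" "cay_adj G (carrier G - {\<one>}) u v"
    and "cay_colour G x y = cay_colour G u v"
  then have "cay_colour G (\<phi> x) (\<phi> y) = cay_colour G (\<phi> u) (\<phi> v)"
    using \<phi> unfolding colour_permuting_def by blast
  then show "cay_colour G (c \<otimes> \<phi> x) (c \<otimes> \<phi> y) = cay_colour G (c \<otimes> \<phi> u) (c \<otimes> \<phi> v)"
    using adj c bij_betw_apply[OF bij] by (simp add: complete_cay_adj cay_colour_mult_left)
qed

lemma affine_mult_left_iso:
  assumes \<sigma>: "\<sigma> \<in> iso G G" and c: "c \<in> carrier G"
    and \<phi>: "\<And>x. x \<in> carrier G \<Longrightarrow> \<phi> x = c \<otimes> \<sigma> x"
  shows "affine G \<phi>"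
  unfolding affine_def
proof (intro exI conjI ballI)
  have bij: "bij_betw \<sigma> (carrier G) (carrier G)" using \<sigma> by (simp add: iso_def)
  define d where "d = inv_into (carrier G) \<sigma> c"
  show "\<sigma> \<in> iso G G" "d \<in> carrier G"
    using \<sigma> bij_betw_apply[OF bij_betw_inv_into[OF bij] c] by (simp_all add: d_def)
  fix x assume "x \<in> carrier G"
  then show "\<phi> x = \<sigma> (d \<otimes> x)" unfolding \<phi>[OF \<open>x \<in> carrier G\<close>]
    using hom_mult[OF iso_imp_homomorphism[OF \<sigma>]] \<open>d \<in> carrier G\<close>
      bij_betw_inv_into_right[OF bij c] by (simp add: d_def)
qed

end

section \<open>Normalised colour-permuting maps\<close>

locale CCA_normalized_colour_permuting = group G for G (structure) +
  fixes \<psi> :: "'a \<Rightarrow> 'a"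
  assumes CCA: "CCA G (carrier G - {\<one>})"
    and colour_permuting: "colour_permuting G (carrier G - {\<one>}) \<psi>"
    and psi_one: "\<psi> \<one> = \<one>"
begin

abbreviation \<psi>' :: "'a \<Rightarrow> 'a" where "\<psi>' \<equiv> inv_into (carrier G) \<psi>"

lemma psi_bij: "bij_betw \<psi> (carrier G) (carrier G)"
  using colour_permuting unfolding colour_permuting_def complete_cay_aut by blast

lemma psi_closed [simp]: "x \<in> carrier G \<Longrightarrow> \<psi> x \<in> carrier G"
  using bij_betw_apply[OF psi_bij] .

lemma psi_eq_iff: "x \<in> carrier G \<Longrightarrow> y \<in> carrier G \<Longrightarrow> \<psi> x = \<psi> y \<longleftrightarrow> x = y"
  using bij_betw_imp_inj_on[OF psi_bij] by (auto dest: inj_onD)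

lemma psi'_closed [simp]: "v \<in> carrier G \<Longrightarrow> \<psi>' v \<in> carrier G"
  using bij_betw_apply[OF bij_betw_inv_into[OF psi_bij]] .

lemma psi_psi' [simp]: "v \<in> carrier G \<Longrightarrow> \<psi> (\<psi>' v) = v"
  using bij_betw_inv_into_right[OF psi_bij] .

lemma psi'_psi [simp]: "x \<in> carrier G \<Longrightarrow> \<psi>' (\<psi> x) = x"
  using bij_betw_inv_into_left[OF psi_bij] .

lemma psi_colour:
  assumes "x \<in> carrier G" "y \<in> carrier G" "x \<noteq> y" "u \<in> carrier G" "v \<in> carrier G" "u \<noteq> v"
    and "cay_colour G x y = cay_colour G u v"
  shows "cay_colour G (\<psi> x) (\<psi> y) = cay_colour G (\<psi> u) (\<psi> v)"
  using colour_permuting assms unfolding colour_permuting_def complete_cay_adj by blast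

definition defect :: "'a \<Rightarrow> 'a \<Rightarrow> 'a" where
  "defect g v = inv (\<psi> g) \<otimes> \<psi> (g \<otimes> \<psi>' v)"

lemma psi_mult: "g \<in> carrier G \<Longrightarrow> x \<in> carrier G \<Longrightarrow> \<psi> (g \<otimes> x) = \<psi> g \<otimes> defect g (\<psi> x)"
  by (simp add: defect_def)

lemma defect_one: "g \<in> carrier G \<Longrightarrow> defect g \<one> = \<one>"
  using psi'_psi[of \<one>] by (simp add: defect_def psi_one)

lemma defect_bij: "g \<in> carrier G \<Longrightarrow> bij_betw (defect g) (carrier G) (carrier G)"
proof -
  assume g: "g \<in> carrier G"
  have "bij_betw ((\<lambda>y. inv (\<psi> g) \<otimes> y) \<circ> \<psi> \<circ> (\<lambda>u. g \<otimes> u) \<circ> \<psi>') (carrier G) (carrier G)"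
    using bij_betw_inv_into[OF psi_bij] bij_betw_mult_left g psi_bij
    by (metis bij_betw_trans inv_closed psi_closed)
  moreover have "defect g = (\<lambda>v. inv (\<psi> g) \<otimes> \<psi> (g \<otimes> \<psi>' v))" by (rule ext) (simp add: defect_def)
  ultimately show ?thesis by (simp add: comp_def)
qed

text \<open>Left translations preserve colours and \<open>\<psi>\<close> permutes them, so the conjugate
  \<open>defect g\<close> of the left translation by \<open>g\<close> preserves them.\<close>

lemma defect_colour_preserving:
  assumes g: "g \<in> carrier G"
  shows "colour_preserving G (carrier G - {\<one>}) (defect g)"
  unfolding colour_preserving_def complete_cay_aut
proof (intro conjI allI impI)
  show "bij_betw (defect g) (carrier G) (carrier G)" using defect_bij[OF g] .
  fix x y assume "cay_adj G (carrier G - {\<one>}) x y"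
  then have x: "x \<in> carrier G" and y: "y \<in> carrier G" and "x \<noteq> y" by (auto simp: complete_cay_adj)
  then have "\<psi>' x \<noteq> \<psi>' y" by (metis psi_psi')
  have "cay_colour G (defect g x) (defect g y) = cay_colour G (\<psi> (g \<otimes> \<psi>' x)) (\<psi> (g \<otimes> \<psi>' y))"
    using g x y by (simp add: defect_def cay_colour_mult_left)
  also have "\<dots> = cay_colour G (\<psi> (\<psi>' x)) (\<psi> (\<psi>' y))"
    using g x y \<open>\<psi>' x \<noteq> \<psi>' y\<close> by (intro psi_colour) (simp_all add: cay_colour_mult_left)
  also have "\<dots> = cay_colour G x y" using x y by simp
  finally show "cay_colour G (defect g x) (defect g y) = cay_colour G x y" .
qed

lemma defect_self_or_inv_hom: "g \<in> carrier G \<Longrightarrow> self_or_inv_hom G (defect g)"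
  using colour_preserving_fixing_one_self_or_inv_hom[OF CCA defect_colour_preserving defect_one] .

lemma defect_closed [simp]: "g \<in> carrier G \<Longrightarrow> v \<in> carrier G \<Longrightarrow> defect g v \<in> carrier G"
  using self_or_inv_hom_closed[OF defect_self_or_inv_hom] .

lemma defect_mult:
  assumes g: "g \<in> carrier G" and h: "h \<in> carrier G" and v: "v \<in> carrier G"
  shows "defect (g \<otimes> h) v = defect g (defect h v)"
proof -
  define x where "x = \<psi>' v"
  have x: "x \<in> carrier G" "\<psi> x = v" using v by (simp_all add: x_def)
  have "\<psi> (g \<otimes> h) \<otimes> defect (g \<otimes> h) v = \<psi> (g \<otimes> (h \<otimes> x))"
    using psi_mult[of "g \<otimes> h" x] g h x by (simp add: m_assoc)
  also have "\<dots> = \<psi> g \<otimes> defect g (\<psi> h) \<otimes> defect g (defect h v)"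
    using g h x v by (simp add: psi_mult self_or_inv_hom_mult[OF defect_self_or_inv_hom] m_assoc)
  also have "\<dots> = \<psi> (g \<otimes> h) \<otimes> defect g (defect h v)" using g h by (simp add: psi_mult)
  finally show ?thesis using g h v by simp
qed

lemma square_eq_one_if_defect_inv:
  assumes g: "g \<in> carrier G" and "defect g (\<psi> g) = inv (\<psi> g)"
  shows "g \<otimes> g = \<one>"
proof -
  have "\<psi> (g \<otimes> g) = \<psi> \<one>" using psi_mult[OF g g] assms by (simp add: psi_one)
  then show ?thesis using g psi_eq_iff by simp
qed

definition twisted :: "'a \<Rightarrow> bool" where
  "twisted g \<longleftrightarrow> (\<exists>v\<in>carrier G. defect g v \<noteq> v)"

context
  fixes g\<^sub>0 assumes g\<^sub>0: "g\<^sub>0 \<in> carrier G" and twisted_g\<^sub>0: "twisted g\<^sub>0"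
begin

lemma g\<^sub>0_self_or_inv_hom: "self_or_inv_hom G (defect g\<^sub>0)"
  using defect_self_or_inv_hom[OF g\<^sub>0] .

lemma twisted_defect:
  "h \<in> carrier G \<Longrightarrow> twisted h \<Longrightarrow> v \<in> carrier G \<Longrightarrow> defect h v = defect g\<^sub>0 v"
  using CCA_self_or_inv_hom_unique[OF CCA defect_self_or_inv_hom g\<^sub>0_self_or_inv_hom]
    g\<^sub>0 twisted_g\<^sub>0 unfolding twisted_def by blast

lemma twisted_mult:
  assumes g: "g \<in> carrier G" and h: "h \<in> carrier G"
  shows "twisted (g \<otimes> h) \<longleftrightarrow> \<not> (twisted g \<longleftrightarrow> twisted h)"
proof -
  have "defect (g \<otimes> h) v = (if twisted g \<longleftrightarrow> twisted h then v else defect g\<^sub>0 v)"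
    if v: "v \<in> carrier G" for v
    using g h v defect_mult twisted_defect self_or_inv_hom_involution[OF g\<^sub>0_self_or_inv_hom]
    unfolding twisted_def by (smt (verit) defect_closed)
  then show ?thesis using twisted_g\<^sub>0 unfolding twisted_def by auto
qed

lemma twisted_moved_square:
  assumes h: "h \<in> carrier G" "twisted h" and moved: "defect g\<^sub>0 (\<psi> h) \<noteq> \<psi> h"
  shows "h \<otimes> h = \<one>"
  using square_eq_one_if_defect_inv self_or_inv_hom_moved[OF g\<^sub>0_self_or_inv_hom _ moved]
    twisted_defect h by simp

lemma psi_moved_by_twisted: "\<exists>h\<in>carrier G. twisted h \<and> defect g\<^sub>0 (\<psi> h) \<noteq> \<psi> h"
proof (rule ccontr)
  assume "\<not> ?thesis"
  then have fixed: "defect g\<^sub>0 (\<psi> h) = \<psi> h" if "h \<in> carrier G" "twisted h" for h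
    using that by blast
  have "defect g\<^sub>0 (\<psi> x) = \<psi> x" if x: "x \<in> carrier G" for x
  proof (cases "twisted x")
    case False
    then have "twisted (g\<^sub>0 \<otimes> x)" using twisted_mult g\<^sub>0 x twisted_g\<^sub>0 by simp
    then have "defect g\<^sub>0 (\<psi> (g\<^sub>0 \<otimes> x)) = \<psi> (g\<^sub>0 \<otimes> x)" using fixed g\<^sub>0 x by simp
    then have "\<psi> g\<^sub>0 \<otimes> defect g\<^sub>0 (\<psi> x) = defect g\<^sub>0 (\<psi> g\<^sub>0 \<otimes> defect g\<^sub>0 (\<psi> x))"
      using psi_mult[OF g\<^sub>0 x] by simp
    also have "\<dots> = \<psi> g\<^sub>0 \<otimes> \<psi> x"
      using fixed[OF g\<^sub>0 twisted_g\<^sub>0] g\<^sub>0 x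
      by (simp add: self_or_inv_hom_mult[OF g\<^sub>0_self_or_inv_hom] self_or_inv_hom_involution[OF g\<^sub>0_self_or_inv_hom])
    finally show ?thesis using g\<^sub>0 x by simp
  qed (use fixed x in simp)
  then have "defect g\<^sub>0 v = v" if "v \<in> carrier G" for v
    using that psi_psi' psi'_closed by metis
  then show False using twisted_g\<^sub>0 unfolding twisted_def by blast
qed

context
  fixes g\<^sub>1 assumes g\<^sub>1: "g\<^sub>1 \<in> carrier G" "twisted g\<^sub>1"
    and psi_g\<^sub>1_moved: "defect g\<^sub>0 (\<psi> g\<^sub>1) \<noteq> \<psi> g\<^sub>1"
begin

lemma g\<^sub>1_square: "g\<^sub>1 \<otimes> g\<^sub>1 = \<one>"
  using twisted_moved_square[OF g\<^sub>1 psi_g\<^sub>1_moved] .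

lemma g\<^sub>1_fixed: "defect g\<^sub>0 g\<^sub>1 = g\<^sub>1"
  using self_or_inv_hom_fixed_if_involution[OF g\<^sub>0_self_or_inv_hom g\<^sub>1(1) g\<^sub>1_square] .

lemma g\<^sub>1_commute: "s \<in> carrier G \<Longrightarrow> defect g\<^sub>0 s = s \<Longrightarrow> g\<^sub>1 \<otimes> s = s \<otimes> g\<^sub>1"
  using self_or_inv_hom_fixed_commute[OF g\<^sub>0_self_or_inv_hom _ psi_g\<^sub>1_moved] g\<^sub>1 g\<^sub>1_fixed by simp

lemma untwisted_psi_fixed:
  assumes k: "k \<in> carrier G" "\<not> twisted k" "defect g\<^sub>0 (\<psi> k) = \<psi> k"
  shows "defect g\<^sub>0 k = k" and "k \<otimes> k = \<one>"
proof -
  have tw: "twisted (g\<^sub>1 \<otimes> k)" using twisted_mult g\<^sub>1 k by simp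
  have "\<psi> (g\<^sub>1 \<otimes> k) = \<psi> g\<^sub>1 \<otimes> \<psi> k" using psi_mult g\<^sub>1 k by (simp add: twisted_defect)
  moreover have "defect g\<^sub>0 (\<psi> g\<^sub>1 \<otimes> \<psi> k) \<noteq> \<psi> g\<^sub>1 \<otimes> \<psi> k"
    using psi_g\<^sub>1_moved g\<^sub>1 k
    by (simp add: self_or_inv_hom_mult[OF g\<^sub>0_self_or_inv_hom] self_or_inv_hom_closed[OF g\<^sub>0_self_or_inv_hom])
  ultimately have sq: "(g\<^sub>1 \<otimes> k) \<otimes> (g\<^sub>1 \<otimes> k) = \<one>"
    using twisted_moved_square[of "g\<^sub>1 \<otimes> k"] tw g\<^sub>1 k by simp
  then have "defect g\<^sub>0 (g\<^sub>1 \<otimes> k) = g\<^sub>1 \<otimes> k"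
    using self_or_inv_hom_fixed_if_involution[OF g\<^sub>0_self_or_inv_hom] g\<^sub>1 k by simp
  then show fixed: "defect g\<^sub>0 k = k"
    using g\<^sub>1 k g\<^sub>1_fixed
    by (simp add: self_or_inv_hom_mult[OF g\<^sub>0_self_or_inv_hom] self_or_inv_hom_closed[OF g\<^sub>0_self_or_inv_hom])
  show "k \<otimes> k = \<one>" using sq comm_square g\<^sub>1_commute[OF k(1) fixed] g\<^sub>1_square g\<^sub>1 k by simp
qed

lemma untwisted_fixed_psi_fixed:
  assumes s: "s \<in> carrier G" "defect g\<^sub>0 s = s" "s \<otimes> s \<noteq> \<one>"
    and k: "k \<in> carrier G" "\<not> twisted k" "defect g\<^sub>0 k = k"
  shows "defect g\<^sub>0 (\<psi> k) = \<psi> k"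
proof (rule ccontr)
  assume moved: "defect g\<^sub>0 (\<psi> k) \<noteq> \<psi> k"
  obtain k' where k': "k' \<in> carrier G" "\<not> twisted k'" "defect g\<^sub>0 k' \<noteq> k'"
  proof -
    obtain n where n: "n \<in> carrier G" "defect g\<^sub>0 n \<noteq> n" using twisted_g\<^sub>0 unfolding twisted_def by blast
    show thesis
    proof (cases "twisted n")
      case True
      then have "\<not> twisted (g\<^sub>1 \<otimes> n)" using twisted_mult g\<^sub>1 n by simp
      moreover have "defect g\<^sub>0 (g\<^sub>1 \<otimes> n) \<noteq> g\<^sub>1 \<otimes> n"
        using g\<^sub>1 n g\<^sub>1_fixed
        by (simp add: self_or_inv_hom_mult[OF g\<^sub>0_self_or_inv_hom] self_or_inv_hom_closed[OF g\<^sub>0_self_or_inv_hom])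
      ultimately show thesis using that[of "g\<^sub>1 \<otimes> n"] g\<^sub>1 n by simp
    qed (use that n in blast)
  qed
  have "defect g\<^sub>0 (\<psi> k') \<noteq> \<psi> k'" using untwisted_psi_fixed(1)[OF k'(1,2)] k'(3) by blast
  then have "defect g\<^sub>0 (\<psi> k \<otimes> \<psi> k') = \<psi> k \<otimes> \<psi> k'"
    using self_or_inv_hom_moved_mult_moved[OF g\<^sub>0_self_or_inv_hom s] moved k k' by simp
  moreover have "\<psi> (k \<otimes> k') = \<psi> k \<otimes> \<psi> k'"
    using psi_mult k k' unfolding twisted_def by simp
  moreover have "\<not> twisted (k \<otimes> k')" using twisted_mult k k' by simp
  ultimately have "defect g\<^sub>0 (k \<otimes> k') = k \<otimes> k'" using untwisted_psi_fixed(1) k k' by simp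
  then show False
    using k k'
    by (simp add: self_or_inv_hom_mult[OF g\<^sub>0_self_or_inv_hom] self_or_inv_hom_closed[OF g\<^sub>0_self_or_inv_hom])
qed

lemma defect_g\<^sub>0_inv: "x \<in> carrier G \<Longrightarrow> defect g\<^sub>0 x = inv x"
proof (rule ccontr)
  assume x: "x \<in> carrier G" and "defect g\<^sub>0 x \<noteq> inv x"
  then have fixed: "defect g\<^sub>0 x = x" and non_involution: "x \<otimes> x \<noteq> \<one>"
    using self_or_inv_hom_moved[OF g\<^sub>0_self_or_inv_hom] square_eq_one_iff_inv_eq by metis+
  have "x \<otimes> x = \<one>"
  proof (cases "twisted x")
    case False
    then show ?thesis
      using untwisted_psi_fixed(2) untwisted_fixed_psi_fixed[OF x fixed non_involution x False fixed] x
      by blast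
  next
    case True
    define t where "t = g\<^sub>1 \<otimes> x"
    have t: "t \<in> carrier G" "\<not> twisted t" "defect g\<^sub>0 t = t"
      using g\<^sub>1 x True twisted_mult g\<^sub>1_fixed fixed
      by (simp_all add: t_def self_or_inv_hom_mult[OF g\<^sub>0_self_or_inv_hom])
    then have "t \<otimes> t = \<one>"
      using untwisted_psi_fixed(2) untwisted_fixed_psi_fixed[OF x fixed non_involution t] by blast
    then show ?thesis using comm_square g\<^sub>1_commute[OF x fixed] g\<^sub>1_square g\<^sub>1 x by (simp add: t_def)
  qed
  with non_involution show False by simp
qed

end

lemma defect_g\<^sub>0_not_inv: "\<exists>x\<in>carrier G. defect g\<^sub>0 x \<noteq> inv x"
proof (rule ccontr)
  assume "\<not> ?thesis"
  then have inv: "\<And>x. x \<in> carrier G \<Longrightarrow> defect g\<^sub>0 x = inv x" by blast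
  have twisted_square: "h \<otimes> h = \<one>" if "h \<in> carrier G" "twisted h" for h
    using square_eq_one_if_defect_inv twisted_defect inv that by simp
  have "x \<otimes> x = \<one>" if x: "x \<in> carrier G" for x
  proof (cases "twisted x")
    case False
    then have "(g\<^sub>0 \<otimes> x) \<otimes> (g\<^sub>0 \<otimes> x) = \<one>"
      using twisted_square twisted_mult g\<^sub>0 twisted_g\<^sub>0 x by simp
    then show ?thesis
      using comm_square comm_if_self_or_inv_hom_inv[OF g\<^sub>0_self_or_inv_hom inv]
        twisted_square[OF g\<^sub>0 twisted_g\<^sub>0] g\<^sub>0 x
      by simp
  qed (use twisted_square x in blast)
  then have "defect g\<^sub>0 v = v" if "v \<in> carrier G" for v
    using inv square_eq_one_iff_inv_eq that by simp
  then show False using twisted_g\<^sub>0 unfolding twisted_def by blast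
qed

lemma not_twisted: False
  using psi_moved_by_twisted defect_g\<^sub>0_inv defect_g\<^sub>0_not_inv by blast

end

lemma defect_trivial: "g \<in> carrier G \<Longrightarrow> v \<in> carrier G \<Longrightarrow> defect g v = v"
  using not_twisted unfolding twisted_def by blast

lemma psi_iso: "\<psi> \<in> iso G G"
proof (rule isoI)
  show "\<psi> \<in> hom G G" by (rule homI) (simp_all add: psi_mult defect_trivial)
qed (rule psi_bij)

end

theorem corollary5p1:
  fixes G :: "('a, 'b) monoid_scheme"
  assumes "group G"
    and "CCA G (carrier G - {\<one>\<^bsub>G\<^esub>})"
  shows "strongly_CCA G (carrier G - {\<one>\<^bsub>G\<^esub>})"
  unfolding strongly_CCA_def
proof (intro allI impI)
  interpret group G by (rule assms(1))
  fix \<phi> assume \<phi>: "colour_permuting G (carrier G - {\<one>\<^bsub>G\<^esub>}) \<phi>"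
  then have \<phi>_closed: "\<And>x. x \<in> carrier G \<Longrightarrow> \<phi> x \<in> carrier G"
    unfolding colour_permuting_def complete_cay_aut by (metis bij_betw_apply)
  define c where "c = \<phi> \<one>\<^bsub>G\<^esub>"
  have c: "c \<in> carrier G" using \<phi>_closed by (simp add: c_def)
  interpret CCA_normalized_colour_permuting G "\<lambda>x. inv\<^bsub>G\<^esub> c \<otimes>\<^bsub>G\<^esub> \<phi> x"
    using assms(2) colour_permuting_mult_left[OF \<phi> inv_closed[OF c]] c
    by unfold_locales (simp_all add: c_def)
  show "affine G \<phi>"
    using affine_mult_left_iso[OF psi_iso c] c \<phi>_closed by simp
qed

end
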